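(* Let $\mathcal H$ be a real Hilbert space and let $f:\mathcal H\to\mathbb R$ be continuously differentiable and $\mu$-strongly convex for some $\mu>0$, with unique minimizer $x^*$. Let $t_0>0$ and let $u:[t_0,+\infty[\to\mathcal H$ be a classical solution of $$\dddot u(t)+3\sqrt\mu\,\ddot u(t)+2\mu\,\dot u(t)+\sqrt\mu\,\nabla f\Big(u(t)+\tfrac{1}{\sqrt\mu}\dot u(t)\Big)=0 .$$ Set $y(t)=u(t)+\frac{1}{\sqrt\mu}\dot u(t)$, $$\mathcal E(t)=f(y(t))-\inf_{\mathcal H}f+\frac12\Big\|\sqrt\mu\,(y(t)-x^* )+\dot u(t)+\tfrac1{\sqrt\mu}\ddot u(t)\Big\|^2,$$ $F(t_0)=f(u(t_0))-\inf_{\mathcal H}f$ and $C=\mathcal E(t_0)e^{\sqrt\mu\,t_0}$. Then for all $t\ge t_0$: $$f(y(t))-\inf_{\mathcal H}f\le \mathcal E(t_0)e^{-\sqrt\mu(t-t_0)};$$ $$f(u(t))-\inf_{\mathcal H}f\le\big(C\sqrt\mu\,t+e^{\sqrt\mu t_0}F(t_0)-C\sqrt\mu\,t_0\big)e^{-\sqrt\mu t};$$ $$\|y(t)-x^*\|^2\le\frac{e^{\sqrt\mu t_0}}{\sqrt\mu}\Big(\sqrt\mu\,\|y(t_0)-x^*\|^2+2\mathcal E(t_0)(t-t_0)\Big)e^{-\sqrt\mu t};$$ $$\|u(t)-x^*\|^2\le\frac{2}{\mu}\big(C\sqrt\mu\,t+e^{\sqrt\mu t_0}F(t_0)-C\sqrt\mu\,t_0\big)e^{-\sqrt\mu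 t}.$$
   Context: $f$ is $\mu$-strongly convex if $f-\frac\mu2\|\cdot\|^2$ is convex. $\dot u,\ddot u,\dddot u$ are time derivatives of $u$. *)

theory Defs
  imports "HOL-Analysis.Analysis"
begin

definition strongly_convex :: "real \<Rightarrow> ('a::real_inner \<Rightarrow> real) \<Rightarrow> bool" where
  "strongly_convex \<mu> f \<longleftrightarrow> convex_on UNIV (\<lambda>x. f x - \<mu> / 2 * (norm x)\<^sup>2)"

end

theory Submission
  imports Defs
begin

(*
  Write s = sqrt mu. The shifted trajectory y = u + u'/s solves the heavy-ball system
  y'' + 2 s y' + grad f(y) = 0, and strong convexity at y towards the minimizer gives
  E' + s E <= 0 for E = f(y) - f(xs) + 1/2 |s (y - xs) + y'|^2, so exp(s t) E(t) is nonincreasing.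
  Every other estimate is a differential inequality phi' + s phi <= K exp(-s t), which integrates
  to exp(s t) phi(t) <= exp(s t0) phi(t0) + K (t - t0): for phi = f(u) - f(xs) because u' = s (y - u)
  and convexity give d/dt f(u) <= s (f(y) - f(u)); for phi = |y - xs|^2 because
  s (phi' + s phi) = |s (y - xs) + y'|^2 - |y'|^2 <= 2 E. The bound on |u - xs|^2 then follows
  from strong convexity at the minimizer, where the gradient vanishes.
*)

lemma convex_on_along_line:
  fixes g :: "'a::real_vector \<Rightarrow> real"
  assumes "convex_on UNIV g"
  shows "convex_on UNIV (\<lambda>t. g (x + t *\<^sub>R d))"
proof (rule convex_onI)
  fix t a b :: real
  assume t: "0 < t" "t < 1"
  have "x + ((1 - t) *\<^sub>R a + t *\<^sub>R b) *\<^sub>R d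
      = (1 - t) *\<^sub>R (x + a *\<^sub>R d) + t *\<^sub>R (x + b *\<^sub>R d)"
    by (simp add: algebra_simps)
  then show "g (x + ((1 - t) *\<^sub>R a + t *\<^sub>R b) *\<^sub>R d)
      \<le> (1 - t) * g (x + a *\<^sub>R d) + t * g (x + b *\<^sub>R d)"
    using convex_onD[OF assms, of t] t by simp
qed simp

lemma convex_on_above_tangent:
  fixes g :: "'a::real_normed_vector \<Rightarrow> real"
  assumes convex: "convex_on UNIV g" and deriv: "(g has_derivative g') (at x)"
  shows "g x + g' (z - x) \<le> g z"
proof -
  define h where "h = (\<lambda>t. g (x + t *\<^sub>R (z - x)))"
  interpret bounded_linear g'
    using deriv by (rule has_derivative_bounded_linear)
  have "((\<lambda>t. x + t *\<^sub>R (z - x)) has_derivative (\<lambda>t. t *\<^sub>R (z - x))) (at 0)"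
    by (auto intro!: derivative_eq_intros)
  from has_derivative_compose[OF this, of g g'] deriv
  have "(h has_derivative (\<lambda>t. g' (t *\<^sub>R (z - x)))) (at 0)"
    by (simp add: h_def)
  then have "(h has_field_derivative g' (z - x)) (at 0)"
    by (rule has_derivative_imp_has_field_derivative) (simp add: scaleR)
  moreover have "convex_on UNIV h"
    unfolding h_def by (rule convex_on_along_line[OF convex])
  ultimately have "h 1 - h 0 \<ge> g' (z - x) * (1 - 0)"
    by (intro convex_on_imp_above_tangent) auto
  then show ?thesis
    by (simp add: h_def)
qed

lemma strongly_convex_above_tangent:
  fixes f :: "'a::real_inner \<Rightarrow> real"
  assumes "strongly_convex \<mu> f" and "(f has_derivative (\<lambda>h. g \<bullet> h)) (at x)"
  shows "f x + g \<bullet> (z - x) + \<mu> / 2 * (norm (z - x))\<^sup>2 \<le> f z"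
proof -
  have convex: "convex_on UNIV (\<lambda>x. f x - \<mu> / 2 * (x \<bullet> x))"
    using assms(1) unfolding strongly_convex_def by (simp add: power2_norm_eq_inner)
  have "((\<lambda>x. f x - \<mu> / 2 * (x \<bullet> x))
      has_derivative (\<lambda>h. g \<bullet> h - \<mu> / 2 * (h \<bullet> x + x \<bullet> h))) (at x)"
    by (auto intro!: derivative_eq_intros assms(2))
  from convex_on_above_tangent[OF convex this, of z] show ?thesis
    by (simp add: power2_norm_eq_inner inner_commute algebra_simps)
qed

lemma strongly_convex_dist_minimizer:
  fixes f :: "'a::real_inner \<Rightarrow> real"
  assumes "strongly_convex \<mu> f" and "\<mu> > 0"
    and deriv: "(f has_derivative (\<lambda>h. g \<bullet> h)) (at xs)" and min: "\<And>x. f xs \<le> f x"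
  shows "(norm (z - xs))\<^sup>2 \<le> 2 / \<mu> * (f z - f xs)"
proof -
  have "(\<lambda>h. g \<bullet> h) = (\<lambda>h. 0)"
    by (rule differential_zero_maxmin[of xs UNIV, OF _ _ deriv]) (auto intro: min)
  then have "g = 0"
    by (metis inner_eq_zero_iff)
  with strongly_convex_above_tangent[OF assms(1) deriv, of z] \<open>\<mu> > 0\<close> show ?thesis
    by (simp add: field_simps)
qed

lemma has_real_derivative_inner_self:
  fixes w :: "real \<Rightarrow> 'a::real_inner"
  assumes "(w has_vector_derivative w') (at t within S)"
  shows "((\<lambda>t. w t \<bullet> w t) has_real_derivative 2 * (w t \<bullet> w')) (at t within S)"
proof -
  note deriv = assms[unfolded has_vector_derivative_def]
  show ?thesis
    using has_derivative_inner[OF deriv deriv]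
    by (rule has_derivative_imp_has_field_derivative) (simp add: inner_commute algebra_simps)
qed

lemma has_real_derivative_gradient_comp:
  fixes f :: "'a::real_inner \<Rightarrow> real"
  assumes "(f has_derivative (\<lambda>h. g \<bullet> h)) (at (\<gamma> t))"
    and "(\<gamma> has_vector_derivative \<gamma>') (at t within S)"
  shows "((\<lambda>t. f (\<gamma> t)) has_real_derivative g \<bullet> \<gamma>') (at t within S)"
  using has_derivative_compose[OF assms(2)[unfolded has_vector_derivative_def] assms(1)]
  by (rule has_derivative_imp_has_field_derivative) simp

lemma exp_weighted_growth_bound:
  fixes \<phi> \<phi>' :: "real \<Rightarrow> real"
  assumes deriv: "\<And>t. t \<ge> t0 \<Longrightarrow> (\<phi> has_real_derivative \<phi>' t) (at t within {t0..})"
    and bound: "\<And>t. t \<ge> t0 \<Longrightarrow> exp (s * t) * (\<phi>' t + s * \<phi> t) \<le> K"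
    and t: "t \<ge> t0"
  shows "exp (s * t) * \<phi> t \<le> exp (s * t0) * \<phi> t0 + K * (t - t0)"
proof -
  define \<psi> \<psi>' where "\<psi> t = exp (s * t) * \<phi> t - K * t"
    and "\<psi>' t = exp (s * t) * (\<phi>' t + s * \<phi> t) - K" for t
  have "\<exists>\<xi>\<in>{t0..t}. \<psi> t - \<psi> t0 = (t - t0) * \<psi>' \<xi>"
  proof (rule mvt_very_simple[OF t])
    fix \<xi> assume "t0 \<le> \<xi>" "\<xi> \<le> t"
    then have "(\<phi> has_real_derivative \<phi>' \<xi>) (at \<xi> within {t0..t})"
      by (auto intro: has_field_derivative_subset[OF deriv])
    then have "(\<psi> has_real_derivative \<psi>' \<xi>) (at \<xi> within {t0..t})"
      unfolding \<psi>_def \<psi>'_def by (auto intro!: derivative_eq_intros simp: algebra_simps)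
    then show "(\<psi> has_derivative (\<lambda>h. h * \<psi>' \<xi>)) (at \<xi> within {t0..t})"
      by (simp add: has_field_derivative_def mult.commute[of _ "\<psi>' \<xi>"])
  qed
  then obtain \<xi> where "\<xi> \<ge> t0" "\<psi> t - \<psi> t0 = (t - t0) * \<psi>' \<xi>"
    by auto
  moreover have "(t - t0) * \<psi>' \<xi> \<le> 0"
    using bound[OF \<open>\<xi> \<ge> t0\<close>] t unfolding \<psi>'_def by (simp add: mult_nonneg_nonpos)
  ultimately show ?thesis
    unfolding \<psi>_def by (simp add: algebra_simps)
qed

lemma mult_exp_le_iff:
  fixes s t a b :: real
  shows "exp (s * t) * a \<le> b \<longleftrightarrow> a \<le> b * exp (- s * t)"
proof -
  have "b * exp (- s * t) = b / exp (s * t)"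
    by (simp add: exp_minus divide_inverse)
  then show ?thesis
    by (simp add: pos_le_divide_eq mult.commute)
qed

locale third_order_flow =
  fixes f :: "'a::real_inner \<Rightarrow> real" and gradf :: "'a \<Rightarrow> 'a"
    and \<mu> t0 :: real and xs :: 'a and u u1 u2 u3 :: "real \<Rightarrow> 'a"
  assumes grad: "\<And>x. (f has_derivative (\<lambda>h. gradf x \<bullet> h)) (at x)"
    and mu_pos: "\<mu> > 0"
    and sconv: "strongly_convex \<mu> f"
    and minimizer: "\<And>x. f xs \<le> f x"
    and du: "\<And>t. t \<ge> t0 \<Longrightarrow> (u has_vector_derivative u1 t) (at t within {t0..})"
    and du1: "\<And>t. t \<ge> t0 \<Longrightarrow> (u1 has_vector_derivative u2 t) (at t within {t0..})"
    and du2: "\<And>t. t \<ge> t0 \<Longrightarrow> (u2 has_vector_derivative u3 t) (at t within {t0..})"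
    and ode: "\<And>t. t \<ge> t0 \<Longrightarrow>
       u3 t + (3 * sqrt \<mu>) *\<^sub>R u2 t + (2 * \<mu>) *\<^sub>R u1 t
       + sqrt \<mu> *\<^sub>R gradf (u t + (1 / sqrt \<mu>) *\<^sub>R u1 t) = 0"
begin

definition rate :: real where "rate = sqrt \<mu>"

lemma rate_pos: "rate > 0"
  using mu_pos by (simp add: rate_def)

lemma rate_square: "rate * rate = \<mu>"
  using mu_pos by (simp add: rate_def)

definition y :: "real \<Rightarrow> 'a" where "y t = u t + (1 / rate) *\<^sub>R u1 t"

definition velocity :: "real \<Rightarrow> 'a" where "velocity t = u1 t + (1 / rate) *\<^sub>R u2 t"

definition shifted_velocity :: "real \<Rightarrow> 'a" where
  "shifted_velocity t = rate *\<^sub>R (y t - xs) + velocity t"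

definition energy :: "real \<Rightarrow> real" where
  "energy t = f (y t) - f xs + 1/2 * (norm (shifted_velocity t))\<^sup>2"

lemma y_has_vector_derivative:
  "t \<ge> t0 \<Longrightarrow> (y has_vector_derivative velocity t) (at t within {t0..})"
  unfolding y_def[abs_def] velocity_def
  by (auto intro!: derivative_eq_intros du du1)

lemma velocity_has_vector_derivative:
  assumes t: "t \<ge> t0"
  shows "(velocity has_vector_derivative - (2 * rate) *\<^sub>R velocity t - gradf (y t)) (at t within {t0..})"
proof -
  have deriv: "(velocity has_vector_derivative u2 t + (1 / rate) *\<^sub>R u3 t) (at t within {t0..})"
    unfolding velocity_def[abs_def] using t by (auto intro!: derivative_eq_intros du1 du2)
  have u3_eq: "(1 / rate) *\<^sub>R u3 t = - 3 *\<^sub>R u2 t - (2 * rate) *\<^sub>R u1 t - gradf (y t)"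
  proof -
    have "(1 / rate) *\<^sub>R (u3 t + (3 * rate) *\<^sub>R u2 t + (2 * (rate * rate)) *\<^sub>R u1 t
        + rate *\<^sub>R gradf (y t)) = 0"
      using ode[OF t] unfolding y_def rate_square by (simp add: rate_def)
    then show ?thesis
      using rate_pos by (simp add: scaleR_add_right algebra_simps eq_neg_iff_add_eq_0)
  qed
  have three: "u2 t + 2 *\<^sub>R u2 t = 3 *\<^sub>R u2 t"
    using scaleR_add_left[of 1 2 "u2 t"] by (simp only: scaleR_one) simp
  have "u2 t + (1 / rate) *\<^sub>R u3 t = (1 - 3) *\<^sub>R u2 t - (2 * rate) *\<^sub>R u1 t - gradf (y t)"
    unfolding u3_eq by (simp add: algebra_simps scaleR_left_diff_distrib three)
  also have "\<dots> = - (2 * rate) *\<^sub>R velocity t - gradf (y t)"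
    unfolding velocity_def using rate_pos by (simp add: algebra_simps)
  finally show ?thesis
    using deriv by simp
qed

lemma shifted_velocity_has_vector_derivative:
  assumes t: "t \<ge> t0"
  shows "(shifted_velocity has_vector_derivative - (rate *\<^sub>R velocity t + gradf (y t)))
     (at t within {t0..})"
proof -
  have "(shifted_velocity has_vector_derivative
      rate *\<^sub>R velocity t + (- (2 * rate) *\<^sub>R velocity t - gradf (y t))) (at t within {t0..})"
    unfolding shifted_velocity_def[abs_def] using t
    by (auto intro!: derivative_eq_intros y_has_vector_derivative velocity_has_vector_derivative)
  moreover have "(2 * rate) *\<^sub>R velocity t = rate *\<^sub>R velocity t + rate *\<^sub>R velocity t"
    by (simp only: mult_2 scaleR_add_left)
  ultimately show ?thesis
    by (simp add: algebra_simps)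
qed

lemma energy_has_real_derivative:
  "t \<ge> t0 \<Longrightarrow> (energy has_real_derivative
     gradf (y t) \<bullet> velocity t - shifted_velocity t \<bullet> (rate *\<^sub>R velocity t + gradf (y t)))
     (at t within {t0..})"
  unfolding energy_def[abs_def] power2_norm_eq_inner
  by (auto intro!: derivative_eq_intros has_real_derivative_gradient_comp grad
      y_has_vector_derivative has_real_derivative_inner_self shifted_velocity_has_vector_derivative
      simp: inner_diff_right inner_add_right)

lemma norm_shifted_velocity_sq:
  "(norm (shifted_velocity t))\<^sup>2 = rate * rate * ((y t - xs) \<bullet> (y t - xs))
     + 2 * rate * ((y t - xs) \<bullet> velocity t) + velocity t \<bullet> velocity t"
  unfolding shifted_velocity_def power2_norm_eq_inner
  by (simp add: inner_add_left inner_add_right inner_commute algebra_simps)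

lemma energy_dissipation:
  "gradf (y t) \<bullet> velocity t - shifted_velocity t \<bullet> (rate *\<^sub>R velocity t + gradf (y t))
     + rate * energy t \<le> 0"
proof -
  define a b g where "a = y t - xs" and "b = velocity t" and "g = gradf (y t)"
  have norm_a: "(norm (xs - y t))\<^sup>2 = a \<bullet> a" and inner_a: "g \<bullet> (xs - y t) = - (g \<bullet> a)"
    unfolding a_def by (simp_all add: power2_norm_eq_inner inner_commute inner_diff_right)
  have "\<mu> / 2 * (a \<bullet> a) = rate * rate / 2 * (a \<bullet> a)"
    by (simp add: rate_square)
  with strongly_convex_above_tangent[OF sconv grad, of "y t" xs]
  have "f (y t) - f xs + rate * rate / 2 * (a \<bullet> a) \<le> g \<bullet> a"
    unfolding g_def[symmetric] norm_a inner_a by linarith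
  then have "rate * (f (y t) - f xs + rate * rate / 2 * (a \<bullet> a)) \<le> rate * (g \<bullet> a)"
    using rate_pos by (simp add: mult_left_mono)
  moreover have "0 \<le> rate / 2 * (b \<bullet> b)"
    using rate_pos by simp
  moreover have "shifted_velocity t \<bullet> (rate *\<^sub>R b + g)
      = rate * rate * (a \<bullet> b) + rate * (a \<bullet> g) + rate * (b \<bullet> b) + b \<bullet> g"
    unfolding shifted_velocity_def a_def[symmetric] b_def[symmetric]
    by (simp add: inner_add_left inner_add_right algebra_simps)
  then have "g \<bullet> b - shifted_velocity t \<bullet> (rate *\<^sub>R b + g) + rate * energy t
      = rate * (f (y t) - f xs + rate * rate / 2 * (a \<bullet> a)) - rate * (g \<bullet> a)
        - rate / 2 * (b \<bullet> b)"
    unfolding energy_def norm_shifted_velocity_sq a_def[symmetric] b_def[symmetric]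
    by (simp add: inner_commute algebra_simps)
  ultimately show ?thesis
    unfolding b_def g_def by linarith
qed

lemma energy_weighted_bound:
  assumes "t \<ge> t0"
  shows "exp (rate * t) * energy t \<le> energy t0 * exp (rate * t0)"
proof -
  have "exp (rate * t) * energy t \<le> exp (rate * t0) * energy t0 + 0 * (t - t0)"
  proof (rule exp_weighted_growth_bound[OF energy_has_real_derivative _ assms])
    fix t
    show "exp (rate * t) * (gradf (y t) \<bullet> velocity t
        - shifted_velocity t \<bullet> (rate *\<^sub>R velocity t + gradf (y t)) + rate * energy t) \<le> 0"
      using energy_dissipation[of t] by (simp add: mult_nonneg_nonpos)
  qed
  then show ?thesis
    by (simp add: mult.commute)
qed

lemma objective_y_weighted_bound:
  assumes "t \<ge> t0"
  shows "exp (rate * t) * (f (y t) - f xs) \<le> energy t0 * exp (rate * t0)"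
proof -
  have "f (y t) - f xs \<le> energy t"
    unfolding energy_def by simp
  then have "exp (rate * t) * (f (y t) - f xs) \<le> exp (rate * t) * energy t"
    by (rule mult_left_mono) simp
  with energy_weighted_bound[OF assms] show ?thesis
    by linarith
qed

lemma objective_y_bound:
  assumes "t \<ge> t0"
  shows "f (y t) - f xs \<le> energy t0 * exp (- rate * (t - t0))"
proof -
  have "f (y t) - f xs \<le> energy t0 * exp (rate * t0) * exp (- rate * t)"
    using objective_y_weighted_bound[OF assms] by (simp only: mult_exp_le_iff)
  also have "\<dots> = energy t0 * exp (- rate * (t - t0))"
    by (simp add: mult.assoc right_diff_distrib flip: exp_add)
  finally show ?thesis .
qed

lemma objective_u_bound:
  assumes "t \<ge> t0"
  shows "f (u t) - f xs \<le> (energy t0 * exp (rate * t0) * rate * t + exp (rate * t0) * (f (u t0) - f xs)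
      - energy t0 * exp (rate * t0) * rate * t0) * exp (- rate * t)"
proof -
  let ?C = "energy t0 * exp (rate * t0)"
  have "exp (rate * t) * (f (u t) - f xs) \<le> exp (rate * t0) * (f (u t0) - f xs) + rate * ?C * (t - t0)"
  proof (rule exp_weighted_growth_bound[where \<phi> = "\<lambda>t. f (u t) - f xs", OF _ _ assms])
    fix t assume t: "t \<ge> t0"
    show "((\<lambda>t. f (u t) - f xs) has_real_derivative gradf (u t) \<bullet> u1 t) (at t within {t0..})"
      using has_real_derivative_gradient_comp[OF grad du[OF t]] by (auto intro!: derivative_eq_intros)
    have "u1 t = rate *\<^sub>R (y t - u t)"
      unfolding y_def using rate_pos by simp
    then have "gradf (u t) \<bullet> u1 t = rate * (gradf (u t) \<bullet> (y t - u t))"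
      by simp
    also have "\<dots> \<le> rate * (f (y t) - f (u t))"
    proof -
      have "0 \<le> \<mu> / 2 * (norm (y t - u t))\<^sup>2"
        using mu_pos by simp
      with strongly_convex_above_tangent[OF sconv grad, of "u t" "y t"] rate_pos show ?thesis
        by (intro mult_left_mono) linarith+
    qed
    finally have "gradf (u t) \<bullet> u1 t + rate * (f (u t) - f xs) \<le> rate * (f (y t) - f xs)"
      by (simp add: algebra_simps)
    then have "exp (rate * t) * (gradf (u t) \<bullet> u1 t + rate * (f (u t) - f xs))
        \<le> exp (rate * t) * (rate * (f (y t) - f xs))"
      by (rule mult_left_mono) simp
    also have "\<dots> = rate * (exp (rate * t) * (f (y t) - f xs))"
      by (simp add: algebra_simps)
    also have "\<dots> \<le> rate * ?C"
      using objective_y_weighted_bound[OF t] rate_pos by (simp add: mult_left_mono)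
    finally show "exp (rate * t) * (gradf (u t) \<bullet> u1 t + rate * (f (u t) - f xs)) \<le> rate * ?C" .
  qed
  then show ?thesis
    by (simp only: mult_exp_le_iff) (simp add: algebra_simps)
qed

lemma distance_y_bound:
  assumes "t \<ge> t0"
  shows "(norm (y t - xs))\<^sup>2 \<le> exp (rate * t0) / rate
      * (rate * (norm (y t0 - xs))\<^sup>2 + 2 * energy t0 * (t - t0)) * exp (- rate * t)"
proof -
  let ?C = "energy t0 * exp (rate * t0)"
  have "exp (rate * t) * ((y t - xs) \<bullet> (y t - xs))
      \<le> exp (rate * t0) * ((y t0 - xs) \<bullet> (y t0 - xs)) + 2 * ?C / rate * (t - t0)"
  proof (rule exp_weighted_growth_bound[where \<phi> = "\<lambda>t. (y t - xs) \<bullet> (y t - xs)", OF _ _ assms])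
    fix t assume t: "t \<ge> t0"
    define a b where "a = y t - xs" and "b = velocity t"
    have "((\<lambda>t. y t - xs) has_vector_derivative velocity t) (at t within {t0..})"
      using y_has_vector_derivative[OF t] by (auto intro!: derivative_eq_intros)
    from has_real_derivative_inner_self[OF this]
    show "((\<lambda>t. (y t - xs) \<bullet> (y t - xs)) has_real_derivative 2 * (a \<bullet> b)) (at t within {t0..})"
      unfolding a_def b_def .
    have "rate * (2 * (a \<bullet> b) + rate * (a \<bullet> a)) = (norm (shifted_velocity t))\<^sup>2 - b \<bullet> b"
      unfolding norm_shifted_velocity_sq a_def[symmetric] b_def[symmetric] by (simp add: algebra_simps)
    also have "\<dots> \<le> (norm (shifted_velocity t))\<^sup>2"
      by simp
    also have "\<dots> \<le> 2 * energy t"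
      unfolding energy_def using minimizer[of "y t"] by simp
    finally have "exp (rate * t) * (rate * (2 * (a \<bullet> b) + rate * (a \<bullet> a)))
        \<le> 2 * (exp (rate * t) * energy t)"
      by (simp add: mult_left_mono)
    also have "\<dots> \<le> 2 * ?C"
      using energy_weighted_bound[OF t] by simp
    finally show "exp (rate * t) * (2 * (a \<bullet> b) + rate * (a \<bullet> a)) \<le> 2 * ?C / rate"
      using rate_pos by (simp add: pos_le_divide_eq algebra_simps)
  qed
  then show ?thesis
    unfolding power2_norm_eq_inner
    by (simp only: mult_exp_le_iff) (use rate_pos in \<open>simp add: field_simps\<close>)
qed

lemma distance_u_bound:
  assumes "t \<ge> t0"
  shows "(norm (u t - xs))\<^sup>2 \<le> 2 / \<mu> * (energy t0 * exp (rate * t0) * rate * t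
      + exp (rate * t0) * (f (u t0) - f xs) - energy t0 * exp (rate * t0) * rate * t0) * exp (- rate * t)"
proof -
  have "(norm (u t - xs))\<^sup>2 \<le> 2 / \<mu> * (f (u t) - f xs)"
    by (rule strongly_convex_dist_minimizer[OF sconv mu_pos grad minimizer])
  also have "\<dots> \<le> 2 / \<mu> * ((energy t0 * exp (rate * t0) * rate * t + exp (rate * t0) * (f (u t0) - f xs)
      - energy t0 * exp (rate * t0) * rate * t0) * exp (- rate * t))"
    using objective_u_bound[OF assms] mu_pos by (intro mult_left_mono) simp_all
  finally show ?thesis
    by (simp only: mult.assoc)
qed

end

theorem theorem5p1:
  fixes f :: "'a::{real_inner, complete_space} \<Rightarrow> real"
    and gradf :: "'a \<Rightarrow> 'a"
    and \<mu> t0 :: real and xs :: 'a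
    and u u1 u2 u3 :: "real \<Rightarrow> 'a"
    and y :: "real \<Rightarrow> 'a" and E :: "real \<Rightarrow> real" and F0 C :: real
  assumes grad: "\<And>x. (f has_derivative (\<lambda>h. gradf x \<bullet> h)) (at x)"
    and grad_cont: "continuous_on UNIV gradf"
    and mu_pos: "\<mu> > 0"
    and sconv: "strongly_convex \<mu> f"
    and minimizer: "\<And>x. f xs \<le> f x"
    and t0_pos: "t0 > 0"
    and du: "\<And>t. t \<ge> t0 \<Longrightarrow> (u has_vector_derivative u1 t) (at t within {t0..})"
    and du1: "\<And>t. t \<ge> t0 \<Longrightarrow> (u1 has_vector_derivative u2 t) (at t within {t0..})"
    and du2: "\<And>t. t \<ge> t0 \<Longrightarrow> (u2 has_vector_derivative u3 t) (at t within {t0..})"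
    and u3_cont: "continuous_on {t0..} u3"
    and ode: "\<And>t. t \<ge> t0 \<Longrightarrow>
       u3 t + (3 * sqrt \<mu>) *\<^sub>R u2 t + (2 * \<mu>) *\<^sub>R u1 t
       + sqrt \<mu> *\<^sub>R gradf (u t + (1 / sqrt \<mu>) *\<^sub>R u1 t) = 0"
    and y_def: "y = (\<lambda>t. u t + (1 / sqrt \<mu>) *\<^sub>R u1 t)"
    and E_def: "E = (\<lambda>t. f (y t) - (INF x. f x)
       + 1/2 * (norm (sqrt \<mu> *\<^sub>R (y t - xs) + u1 t + (1 / sqrt \<mu>) *\<^sub>R u2 t))\<^sup>2)"
    and F0_def: "F0 = f (u t0) - (INF x. f x)"
    and C_def: "C = E t0 * exp (sqrt \<mu> * t0)"
  shows "\<forall>t\<ge>t0.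
     f (y t) - (INF x. f x) \<le> E t0 * exp (- sqrt \<mu> * (t - t0))
   \<and> f (u t) - (INF x. f x) \<le>
       (C * sqrt \<mu> * t + exp (sqrt \<mu> * t0) * F0 - C * sqrt \<mu> * t0) * exp (- sqrt \<mu> * t)
   \<and> (norm (y t - xs))\<^sup>2 \<le>
       exp (sqrt \<mu> * t0) / sqrt \<mu> * (sqrt \<mu> * (norm (y t0 - xs))\<^sup>2 + 2 * E t0 * (t - t0))
       * exp (- sqrt \<mu> * t)
   \<and> (norm (u t - xs))\<^sup>2 \<le>
       2 / \<mu> * (C * sqrt \<mu> * t + exp (sqrt \<mu> * t0) * F0 - C * sqrt \<mu> * t0) * exp (- sqrt \<mu> * t)"
proof -
  interpret flow: third_order_flow f gradf \<mu> t0 xs u u1 u2 u3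
    using grad mu_pos sconv minimizer du du1 du2 ode by unfold_locales
  have inf: "(INF x. f x) = f xs"
    by (rule cInf_eq_minimum) (auto intro: minimizer)
  have y: "y = flow.y"
    unfolding y_def flow.y_def[abs_def] flow.rate_def ..
  have E: "E = flow.energy"
    unfolding E_def flow.energy_def[abs_def] flow.shifted_velocity_def flow.velocity_def flow.rate_def y inf
    by (simp add: add.assoc)
  show ?thesis
    using flow.objective_y_bound flow.objective_u_bound flow.distance_y_bound flow.distance_u_bound
    unfolding inf y E C_def F0_def flow.rate_def
    by (simp add: mult.assoc)
qed

end
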